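(* Let $(\beta_{\rm sd},\beta_{\rm rd},\beta_{\rm sr})\in\mathbb{R}_+^3$ with $\beta_{\rm rd},\beta_{\rm sr}>0$ (or more generally $C,I>0$), and set $S=\mathsf{SNR}^{\beta_{\rm sd}}$, $I=\mathsf{SNR}^{\beta_{\rm rd}}$, $C=\mathsf{SNR}^{\beta_{\rm sr}}$. Then the NNC rate with deterministic switch $r^{\rm(NNC,det)}$ satisfies $$\liminf_{\mathsf{SNR}\to\infty}\frac{r^{\rm(NNC,det)}}{\log(1+\mathsf{SNR})}\ge\beta_{\rm sd}+\frac{[\beta_{\rm rd}-\beta_{\rm sd}]^+[\beta_{\rm sr}-\beta_{\rm sd}]^+}{[\beta_{\rm rd}-\beta_{\rm sd}]^++[\beta_{\rm sr}-\beta_{\rm sd}]^+}$$ (fraction read as $0$ when its denominator vanishes), i.e. NNC with deterministic switch achieves the gDoF of the G-HD-RC.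
   Context: $r^{\rm(NNC,det)}:=\sup_{\gamma\in(0,1),\beta\in[0,1],\sigma_0^2>0}\min\{\gamma I_9+(1-\gamma)I_{10},\gamma I_{11}+(1-\gamma)I_{12}\}$ with $P_{s,0}=\beta/\gamma$, $P_{s,1}=(1-\beta)/(1-\gamma)$, $P_{r,1}=1/(1-\gamma)$, $I_9=\log(1+SP_{s,0})-\log(1+1/\sigma_0^2)$, $I_{10}=\log(1+SP_{s,1}+IP_{r,1})$, $I_{11}=\log(1+SP_{s,0}+\frac{C}{1+\sigma_0^2}P_{s,0})$, $I_{12}=\log(1+SP_{s,1})$; it is an achievable rate for the Gaussian half-duplex relay channel $Y_r=\sqrt{C}X_s(1-S_r)+Z_r$, $Y_d=\sqrt S X_s+e^{j\theta}\sqrt I X_rS_r+Z_d$ (unit power constraints, unit-variance independent complex Gaussian noises, relay state $S_r\in\{0,1\}$). $[x]^+=\max\{x,0\}$; logs base 2. *)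

theory Defs
  imports "HOL-Analysis.Analysis"
begin

text \<open>Logs are base 2. The supremum is
  taken in the extended reals (so it is always well defined).
  Parameters: g = gamma in (0,1), b = beta in [0,1], v = sigma_0^2 > 0.\<close>

definition nnc_det_rate :: "real \<Rightarrow> real \<Rightarrow> real \<Rightarrow> ereal" where
  "nnc_det_rate S I C =
    (SUP p \<in> {(g, b, v). 0 < g \<and> g < 1 \<and> 0 \<le> b \<and> b \<le> 1 \<and> 0 < v}.
      (case p of (g, b, v) \<Rightarrow>
        let Ps0 = b / g; Ps1 = (1 - b) / (1 - g); Pr1 = 1 / (1 - g);
            I9 = log 2 (1 + S * Ps0) - log 2 (1 + 1 / v);
            I10 = log 2 (1 + S * Ps1 + I * Pr1);
            I11 = log 2 (1 + S * Ps0 + (C / (1 + v)) * Ps0);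
            I12 = log 2 (1 + S * Ps1)
        in ereal (min (g * I9 + (1 - g) * I10) (g * I11 + (1 - g) * I12))))"

definition pos_part :: "real \<Rightarrow> real" where
  "pos_part x = max x 0"

definition gdof_hd :: "real \<Rightarrow> real \<Rightarrow> real \<Rightarrow> real" where
  "gdof_hd bsd brd bsr =
    (let a = pos_part (brd - bsd); c = pos_part (bsr - bsd)
     in bsd + (if a + c = 0 then 0 else a * c / (a + c)))"

end

theory Submission
  imports Defs "HOL-Real_Asymp.Real_Asymp"
begin

(* Fix the power split beta = 1/2 and the quantization noise sigma_0^2 = 1, and keep the
   time fraction g free. Each of I9, ..., I12 is then, up to an additive constant, the largest
   exponent among the SNR powers inside its logarithm times log SNR, so both branches of the
   minimum grow like (beta_sd + (1 - g)[beta_rd - beta_sd]^+) log SNR and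
   (beta_sd + g[beta_sr - beta_sd]^+) log SNR. Choosing g = A/(A + C) with
   A = [beta_rd - beta_sd]^+, C = [beta_sr - beta_sd]^+ (any g if A C = 0) balances the two branches at
   exactly the gDoF, and log(1 + SNR) ~ log SNR. *)

definition nnc_det_objective :: "real \<Rightarrow> real \<Rightarrow> real \<Rightarrow> real \<times> real \<times> real \<Rightarrow> real" where
  "nnc_det_objective S I C p =
      (case p of (g, b, v) \<Rightarrow>
        let Ps0 = b / g; Ps1 = (1 - b) / (1 - g); Pr1 = 1 / (1 - g);
            I9 = log 2 (1 + S * Ps0) - log 2 (1 + 1 / v);
            I10 = log 2 (1 + S * Ps1 + I * Pr1);
            I11 = log 2 (1 + S * Ps0 + (C / (1 + v)) * Ps0);
            I12 = log 2 (1 + S * Ps1)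
        in min (g * I9 + (1 - g) * I10) (g * I11 + (1 - g) * I12))"

lemma nnc_det_objective_le_rate:
  assumes "0 < g" "g < 1" "0 \<le> b" "b \<le> 1" "0 < v"
  shows "ereal (nnc_det_objective S I C (g, b, v)) \<le> nnc_det_rate S I C"
  unfolding nnc_det_rate_def
  by (rule SUP_upper2[where i = "(g, b, v)"]) (use assms in \<open>simp_all add: nnc_det_objective_def Let_def\<close>)

lemma nnc_det_objective_half_one:
  "nnc_det_objective S I C (g, 1/2, 1) =
     min (g * (log 2 (1 + S / (2 * g)) - 1) + (1 - g) * log 2 (1 + S / (2 * (1 - g)) + I / (1 - g)))
         (g * log 2 (1 + S / (2 * g) + C / (4 * g)) + (1 - g) * log 2 (1 + S / (2 * (1 - g))))"
  by (simp add: nnc_det_objective_def Let_def field_simps)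

lemma log_ge_powr_divide:
  fixes x e P Q :: real
  assumes "0 < x" "0 < P" "x powr e / P \<le> Q"
  shows "e * log 2 x - log 2 P \<le> log 2 Q"
proof -
  have "log 2 (x powr e / P) \<le> log 2 Q"
    using assms by (intro log_mono) auto
  then show ?thesis
    using assms by (simp add: log_divide log_powr)
qed

lemma convex_combination_ge_pos_part:
  fixes g a e L K u w :: real
  assumes "0 \<le> g" "g \<le> 1" "a * L - K \<le> u" "a * L - K \<le> w" "e * L - K \<le> w"
  shows "(a + (1 - g) * pos_part (e - a)) * L - K \<le> g * u + (1 - g) * w"
proof -
  have "max a e * L - K \<le> w"
    using assms by (auto simp: max_def)
  then have "g * (a * L - K) + (1 - g) * (max a e * L - K) \<le> g * u + (1 - g) * w"
    using assms by (intro add_mono mult_left_mono) auto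
  moreover have "g * (a * L - K) + (1 - g) * (max a e * L - K) = (a + (1 - g) * pos_part (e - a)) * L - K"
    by (simp add: pos_part_def max_def algebra_simps)
  ultimately show ?thesis
    by simp
qed

lemma nnc_det_objective_half_one_ge:
  fixes a r c g :: real
  assumes g: "0 < g" "g < 1"
  obtains K where "\<And>x. 1 \<le> x \<Longrightarrow>
    (a + min ((1 - g) * pos_part (r - a)) (g * pos_part (c - a))) * log 2 x - K
      \<le> nnc_det_objective (x powr a) (x powr r) (x powr c) (g, 1/2, 1)"
proof
  define K where "K = \<bar>log 2 (2 * g)\<bar> + \<bar>log 2 (4 * g)\<bar> + \<bar>log 2 (2 * (1 - g))\<bar> + \<bar>log 2 (1 - g)\<bar> + 1"
  fix x :: real
  assume "1 \<le> x"
  then have x: "0 < x" and L: "0 \<le> log 2 x" by auto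
  define T9 where "T9 = log 2 (1 + x powr a / (2 * g)) - 1"
  define T10 where "T10 = log 2 (1 + x powr a / (2 * (1 - g)) + x powr r / (1 - g))"
  define T11 where "T11 = log 2 (1 + x powr a / (2 * g) + x powr c / (4 * g))"
  define T12 where "T12 = log 2 (1 + x powr a / (2 * (1 - g)))"
  have pos: "0 < 2 * g" "0 < 4 * g" "0 < 2 * (1 - g)" "0 < 1 - g"
    using g by auto
  have K: "log 2 (2 * g) \<le> K - 1" "log 2 (4 * g) \<le> K - 1" "log 2 (2 * (1 - g)) \<le> K - 1" "log 2 (1 - g) \<le> K - 1"
    unfolding K_def by (smt (verit) abs_ge_self abs_ge_zero)+
  have "a * log 2 x - log 2 (2 * g) \<le> log 2 (1 + x powr a / (2 * g))"
    by (rule log_ge_powr_divide) (use x pos in auto)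
  moreover have "a * log 2 x - log 2 (2 * (1 - g)) \<le> T10" "r * log 2 x - log 2 (1 - g) \<le> T10"
    unfolding T10_def by (rule log_ge_powr_divide; use x pos in auto)+
  moreover have "a * log 2 x - log 2 (2 * g) \<le> T11" "c * log 2 x - log 2 (4 * g) \<le> T11"
    unfolding T11_def by (rule log_ge_powr_divide; use x pos in auto)+
  moreover have "a * log 2 x - log 2 (2 * (1 - g)) \<le> T12"
    unfolding T12_def by (rule log_ge_powr_divide) (use x pos in auto)
  ultimately have "a * log 2 x - K \<le> T9" "a * log 2 x - K \<le> T10" "r * log 2 x - K \<le> T10"
    "a * log 2 x - K \<le> T11" "c * log 2 x - K \<le> T11" "a * log 2 x - K \<le> T12"
    using K unfolding T9_def by linarith+
  then have "(a + (1 - g) * pos_part (r - a)) * log 2 x - K \<le> g * T9 + (1 - g) * T10"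
    and "(a + g * pos_part (c - a)) * log 2 x - K \<le> g * T11 + (1 - g) * T12"
    using convex_combination_ge_pos_part[of g a "log 2 x" K T9 T10 r]
      convex_combination_ge_pos_part[of "1 - g" a "log 2 x" K T12 T11 c] g
    by (simp_all add: algebra_simps)
  then show "(a + min ((1 - g) * pos_part (r - a)) (g * pos_part (c - a))) * log 2 x - K
      \<le> nnc_det_objective (x powr a) (x powr r) (x powr c) (g, 1/2, 1)"
    unfolding nnc_det_objective_half_one T9_def T10_def T11_def T12_def
    using L by (smt (verit) min_def mult_right_mono)
qed

lemma gdof_hd_balanced_split:
  fixes a r c :: real
  obtains g where "0 < g" "g < 1"
    "gdof_hd a r c = a + min ((1 - g) * pos_part (r - a)) (g * pos_part (c - a))"
proof -
  define A where "A = pos_part (r - a)"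
  define C where "C = pos_part (c - a)"
  have gdof: "gdof_hd a r c = a + (if A + C = 0 then 0 else A * C / (A + C))"
    unfolding gdof_hd_def Let_def A_def C_def ..
  have "0 \<le> A" "0 \<le> C"
    unfolding A_def C_def pos_part_def by auto
  show thesis
  proof (cases "A = 0 \<or> C = 0")
    case True
    then have "gdof_hd a r c = a + min ((1 - 1/2) * A) (1/2 * C)"
      unfolding gdof using \<open>0 \<le> A\<close> \<open>0 \<le> C\<close> by auto
    then show thesis
      by (intro that[of "1/2"]) (simp_all add: A_def C_def)
  next
    case False
    then have "0 < A" "0 < C"
      using \<open>0 \<le> A\<close> \<open>0 \<le> C\<close> by auto
    then have "(1 - A / (A + C)) * A = A * C / (A + C)" "A / (A + C) * C = A * C / (A + C)"
      by (auto simp: field_simps)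
    then have "gdof_hd a r c = a + min ((1 - A / (A + C)) * A) (A / (A + C) * C)"
      unfolding gdof using \<open>0 < A\<close> \<open>0 < C\<close> by simp
    then show thesis
      using \<open>0 < A\<close> \<open>0 < C\<close> by (intro that[of "A / (A + C)"]) (simp_all add: A_def C_def)
  qed
qed

lemma Liminf_divide_log_ge:
  fixes F :: "real \<Rightarrow> ereal" and m K :: real
  assumes "eventually (\<lambda>x. ereal (m * log 2 x - K) \<le> F x) at_top"
  shows "ereal m \<le> Liminf at_top (\<lambda>x. F x / ereal (log 2 (1 + x)))"
proof -
  have "((\<lambda>x. (m * log 2 x - K) / log 2 (1 + x)) \<longlongrightarrow> m) at_top"
    by real_asymp
  then have "ereal m = Liminf at_top (\<lambda>x. ereal ((m * log 2 x - K) / log 2 (1 + x)))"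
    by (intro lim_imp_Liminf[symmetric]) (auto intro: tendsto_ereal)
  also have "\<dots> \<le> Liminf at_top (\<lambda>x. F x / ereal (log 2 (1 + x)))"
  proof (intro Liminf_mono eventually_mono[OF eventually_conj[OF assms eventually_gt_at_top[of 0]]])
    fix x :: real
    assume x: "ereal (m * log 2 x - K) \<le> F x \<and> 0 < x"
    then have l: "0 < log 2 (1 + x)" by simp
    then have "ereal (m * log 2 x - K) / ereal (log 2 (1 + x)) \<le> F x / ereal (log 2 (1 + x))"
      using x by (intro ereal_divide_right_mono) auto
    then show "ereal ((m * log 2 x - K) / log 2 (1 + x)) \<le> F x / ereal (log 2 (1 + x))"
      using l by simp
  qed
  finally show ?thesis .
qed

theorem proposition13:
  fixes bsd brd bsr :: real
  assumes "0 \<le> bsd" and "0 < brd" and "0 < bsr"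
  shows "Liminf at_top (\<lambda>snr::real.
            nnc_det_rate (snr powr bsd) (snr powr brd) (snr powr bsr) / ereal (log 2 (1 + snr)))
         \<ge> ereal (gdof_hd bsd brd bsr)"
proof -
  obtain g where g: "0 < g" "g < 1"
    and gdof: "gdof_hd bsd brd bsr = bsd + min ((1 - g) * pos_part (brd - bsd)) (g * pos_part (bsr - bsd))"
    by (rule gdof_hd_balanced_split)
  obtain K where K: "\<And>x. 1 \<le> x \<Longrightarrow> gdof_hd bsd brd bsr * log 2 x - K
      \<le> nnc_det_objective (x powr bsd) (x powr brd) (x powr bsr) (g, 1/2, 1)"
    using nnc_det_objective_half_one_ge[OF g] unfolding gdof by blast
  have "eventually (\<lambda>x. ereal (gdof_hd bsd brd bsr * log 2 x - K)
      \<le> nnc_det_rate (x powr bsd) (x powr brd) (x powr bsr)) at_top"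
    using eventually_ge_at_top[of 1]
  proof eventually_elim
    case (elim x)
    have "ereal (gdof_hd bsd brd bsr * log 2 x - K)
        \<le> ereal (nnc_det_objective (x powr bsd) (x powr brd) (x powr bsr) (g, 1/2, 1))"
      using K[OF elim] by simp
    also have "\<dots> \<le> nnc_det_rate (x powr bsd) (x powr brd) (x powr bsr)"
      using g by (intro nnc_det_objective_le_rate) auto
    finally show ?case .
  qed
  then show ?thesis
    by (rule Liminf_divide_log_ge)
qed

end
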